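(* Let $X^+$ be a one-sided subshift with natural extension $\tilde X$, and let $c_kc_{k-1}\dots c_1c_0$ ($k\ge1$) be a block in $\mathcal L(\tilde X)$. Then $\mathrm{sig}(\mathrm{sig}(c_kc_{k-1}\dots c_1)c_0)=\mathrm{sig}(c_kc_{k-1}\dots c_1c_0)$.
   Context: $\mathcal A$ is a finite alphabet and $\sigma$ the shift, $(\sigma x)_i=x_{i+1}$. A one-sided subshift is a nonempty closed $\sigma$-invariant $X^+\subseteq\mathcal A^{\mathbb N}$; its natural extension is $\tilde X=\{x\in\mathcal A^{\mathbb Z}: x_px_{p+1}\dots\in X^+\ \forall p\in\mathbb Z\}$; $\mathcal L(\tilde X)$ is the set of finite blocks occurring in points of $\tilde X$. For $a_{-n}\dots a_0\in\mathcal L(\tilde X)$, $\mathrm{fol}(a_{-n}\dots a_0)=\{b_0b_1\dots\in X^+:\exists b\in\tilde X,\ b_{-n}\dots b_0=a_{-n}\dots a_0\}$. A block $a_{-n}\dots a_0\in\mathcal L(\tilde X)$ with $n\ge1$ is significant if $\mathrm{fol}(a_{-n}\dots a_0)\subsetneq\mathrm{fol}(a_{-n+1}\dots a_0)$; single symbols in $\mathcal L(\tilde X)$ are also counted as significant. The significant form $\mathrm{sig}(a_{-n}\dots a_0)$ is $a_{-k}\dots a_0$ with $k\le n$ maximal such that $a_{-k}\dots a_0$ is significant. *)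

theory Defs
  imports "HOL-Analysis.Analysis"
begin

text \<open>Blocks are lists,
  a block a_{-n} ... a_0 being the list [a_{-n}, ..., a_0].\<close>

definition shift1 :: "(nat \<Rightarrow> 'a) \<Rightarrow> (nat \<Rightarrow> 'a)" where
  "shift1 x = (\<lambda>n. x (Suc n))"

definition one_sided_subshift :: "(nat \<Rightarrow> 'a::finite) set \<Rightarrow> bool" where
  "one_sided_subshift X \<longleftrightarrow>
     X \<noteq> {} \<and>
     closedin (product_topology (\<lambda>_. discrete_topology (UNIV :: 'a set)) (UNIV :: nat set)) X \<and>
     shift1 ` X \<subseteq> X"

definition natext :: "(nat \<Rightarrow> 'a) set \<Rightarrow> (int \<Rightarrow> 'a) set" where
  "natext X = {x. \<forall>p::int. (\<lambda>n::nat. x (p + int n)) \<in> X}"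

definition occurs_at :: "'a list \<Rightarrow> (int \<Rightarrow> 'a) \<Rightarrow> int \<Rightarrow> bool" where
  "occurs_at w x p \<longleftrightarrow> (\<forall>i<length w. x (p + int i) = w ! i)"

definition lang :: "(nat \<Rightarrow> 'a) set \<Rightarrow> 'a list set" where
  "lang X = {w. \<exists>x\<in>natext X. \<exists>p. occurs_at w x p}"

text \<open>fol of the block w = a_{-n}...a_0 (n = length w - 1), placed at positions -n..0.\<close>
definition fol :: "(nat \<Rightarrow> 'a) set \<Rightarrow> 'a list \<Rightarrow> (nat \<Rightarrow> 'a) set" where
  "fol X w = {y \<in> X. \<exists>b\<in>natext X. occurs_at w b (1 - int (length w)) \<and> y = (\<lambda>j. b (int j))}"

definition significant :: "(nat \<Rightarrow> 'a) set \<Rightarrow> 'a list \<Rightarrow> bool" where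
  "significant X w \<longleftrightarrow> w \<in> lang X \<and>
     (length w = 1 \<or> (length w \<ge> 2 \<and> fol X w \<subset> fol X (tl w)))"

definition sig :: "(nat \<Rightarrow> 'a) set \<Rightarrow> 'a list \<Rightarrow> 'a list" where
  "sig X w = drop (LEAST m. significant X (drop m w)) w"

end

theory Submission
  imports Defs
begin

text \<open>Appending a symbol a to a block w replaces fol w by the image under the shift of its
  points y with y 1 = a. Hence fol w = fol (tl w) implies fol (w a) = fol (tl w a): a
  non-significant block stays non-significant when a symbol is appended. So every suffix of
  c_k ... c_1 strictly longer than sig (c_k ... c_1) yields a non-significant suffix of
  c_k ... c_0, and the search for the longest significant suffix of c_k ... c_0 may start at
  sig (c_k ... c_1) c_0.\<close>

lemma occurs_at_append:
  "occurs_at (v @ w) x p \<longleftrightarrow> occurs_at v x p \<and> occurs_at w x (p + int (length v))"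
  unfolding occurs_at_def
proof safe
  fix i assume "\<forall>i<length (v @ w). x (p + int i) = (v @ w) ! i" "i < length w"
  then show "x (p + int (length v) + int i) = w ! i"
    by (metis add.assoc length_append nat_add_left_cancel_less nth_append_length_plus of_nat_add)
next
  fix i assume "\<forall>i<length v. x (p + int i) = v ! i" "\<forall>i<length w. x (p + int (length v) + int i) = w ! i"
    "i < length (v @ w)"
  then show "x (p + int i) = (v @ w) ! i"
    by (cases "i < length v") (auto simp: nth_append add.assoc dest: spec[of _ "i - length v"])
qed (auto simp: nth_append)

lemma occurs_at_single [simp]: "occurs_at [a] x p \<longleftrightarrow> x p = a"
  unfolding occurs_at_def by simp

lemma occurs_at_translate: "occurs_at w (\<lambda>i. x (i + t)) p \<longleftrightarrow> occurs_at w x (p + t)"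
  unfolding occurs_at_def by (simp add: algebra_simps)

lemma natext_translate:
  assumes "x \<in> natext X" shows "(\<lambda>i. x (i + t)) \<in> natext X"
  unfolding natext_def mem_Collect_eq
proof
  fix p :: int
  have "(\<lambda>n::nat. x (p + t + int n)) \<in> X" using assms unfolding natext_def by blast
  then show "(\<lambda>n::nat. x (p + int n + t)) \<in> X" by (simp add: ac_simps)
qed

lemma natext_restrict: "x \<in> natext X \<Longrightarrow> (\<lambda>j. x (int j)) \<in> X"
  unfolding natext_def mem_Collect_eq by (drule spec[of _ 0]) simp

lemma lang_drop: "w \<in> lang X \<Longrightarrow> drop m w \<in> lang X"
  unfolding lang_def using occurs_at_append[of "take m w" "drop m w"] by auto

lemma lang_butlast: "w \<in> lang X \<Longrightarrow> butlast w \<in> lang X"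
  unfolding lang_def using occurs_at_append[of "butlast w" "[last w]"]
  by (cases "w = []") auto

lemma fol_eq: "fol X w = {(\<lambda>j. b (int j)) | b. b \<in> natext X \<and> occurs_at w b (1 - int (length w))}"
  unfolding fol_def using natext_restrict by blast

lemma fol_subset_fol_tl: "fol X w \<subseteq> fol X (tl w)"
proof (cases w)
  case (Cons a v)
  have "occurs_at w b (1 - int (length w)) \<Longrightarrow> occurs_at v b (1 - int (length v))" for b :: "int \<Rightarrow> _"
    using occurs_at_append[of "[a]" v] Cons by simp
  then show ?thesis unfolding fol_eq by (auto simp: Cons)
qed simp

lemma not_significant_iff:
  assumes "w \<in> lang X" "length w \<ge> 2"
  shows "\<not> significant X w \<longleftrightarrow> fol X w = fol X (tl w)"
  using assms fol_subset_fol_tl[of X w] unfolding significant_def by auto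

lemma fol_snoc:
  assumes "w \<noteq> []"
  shows "fol X (w @ [a]) = shift1 ` {y \<in> fol X w. y 1 = a}"
proof
  show "fol X (w @ [a]) \<subseteq> shift1 ` {y \<in> fol X w. y 1 = a}"
  proof
    fix y assume "y \<in> fol X (w @ [a])"
    then obtain b where b: "b \<in> natext X" "occurs_at (w @ [a]) b (- int (length w))"
      and y: "y = (\<lambda>j. b (int j))"
      unfolding fol_eq by auto
    let ?b = "\<lambda>i. b (i - 1)"
    have "?b \<in> natext X" "occurs_at (w @ [a]) ?b (1 - int (length w))"
      using natext_translate[OF b(1), of "- 1"] occurs_at_translate[of "w @ [a]" b "- 1"] b(2)
      by simp_all
    then have "(\<lambda>j. ?b (int j)) \<in> {y \<in> fol X w. y 1 = a}"
      unfolding fol_eq occurs_at_append by auto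
    moreover have "y = shift1 (\<lambda>j. ?b (int j))"
      unfolding y shift1_def by simp
    ultimately show "y \<in> shift1 ` {y \<in> fol X w. y 1 = a}" by blast
  qed
next
  show "shift1 ` {y \<in> fol X w. y 1 = a} \<subseteq> fol X (w @ [a])"
  proof
    fix z assume "z \<in> shift1 ` {y \<in> fol X w. y 1 = a}"
    then obtain b where b: "b \<in> natext X" "occurs_at w b (1 - int (length w))" "b 1 = a"
      and z: "z = shift1 (\<lambda>j. b (int j))"
      unfolding fol_eq by auto
    let ?b = "\<lambda>i. b (i + 1)"
    have "?b \<in> natext X" "occurs_at (w @ [a]) ?b (- int (length w))"
      using natext_translate[OF b(1), of 1] occurs_at_translate[of w b 1 "- int (length w)"] b(2,3)
      by (simp_all add: occurs_at_append)
    moreover have "z = (\<lambda>j. ?b (int j))"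
      unfolding z shift1_def by (simp add: add.commute)
    ultimately show "z \<in> fol X (w @ [a])"
      unfolding fol_eq by auto
  qed
qed

lemma not_significant_snoc:
  assumes "w @ [a] \<in> lang X" "length w \<ge> 2" "\<not> significant X w"
  shows "\<not> significant X (w @ [a])"
proof -
  have "w \<noteq> []" "tl w \<noteq> []"
    using assms(2) by auto (cases w; auto)
  have "fol X w = fol X (tl w)"
    using not_significant_iff lang_butlast[OF assms(1)] assms(2,3) by fastforce
  then have "fol X (w @ [a]) = fol X (tl w @ [a])"
    using fol_snoc[OF \<open>w \<noteq> []\<close>] fol_snoc[OF \<open>tl w \<noteq> []\<close>] by simp
  also have "\<dots> = fol X (tl (w @ [a]))"
    using \<open>w \<noteq> []\<close> by simp
  finally show ?thesis
    using not_significant_iff[OF assms(1)] assms(2) by simp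
qed

lemma significant_last:
  assumes "w \<in> lang X" "w \<noteq> []"
  shows "significant X (drop (length w - 1) w)"
proof -
  have "length (drop (length w - 1) w) = 1"
    using assms(2) by (cases w) auto
  then show ?thesis
    unfolding significant_def using lang_drop[OF assms(1)] by simp
qed

lemma Least_significant_less:
  assumes "w \<in> lang X" "w \<noteq> []"
  shows "(LEAST m. significant X (drop m w)) < length w"
  using Least_le[where P = "\<lambda>m. significant X (drop m w)", OF significant_last[OF assms]] assms(2)
  by (cases w) auto

lemma Least_add_eq:
  fixes k :: nat
  assumes "\<And>j. j < k \<Longrightarrow> \<not> P j" "P n"
  shows "(LEAST m. P m) = k + (LEAST m. P (k + m))"
proof (rule Least_equality)
  have "P (k + (n - k))"
    using assms by (metis le_add_diff_inverse not_le)
  then show "P (k + (LEAST m. P (k + m)))" by (rule LeastI)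
  show "k + (LEAST m. P (k + m)) \<le> m" if "P m" for m
    using Least_le[of "\<lambda>m. P (k + m)" "m - k"] that assms(1) by (metis add_le_cancel_left le_add_diff_inverse not_le)
qed

lemma sig_drop_eq:
  assumes "w \<in> lang X" "w \<noteq> []" "\<And>j. j < k \<Longrightarrow> \<not> significant X (drop j w)"
  shows "sig X (drop k w) = sig X w"
  unfolding sig_def
  using Least_add_eq[of k "\<lambda>m. significant X (drop m w)", OF assms(3) significant_last[OF assms(1,2)]]
  by (simp add: add.commute)

theorem lemma5p1:
  fixes X :: "(nat \<Rightarrow> 'a::finite) set" and c :: "'a list"
  assumes "one_sided_subshift X"
    and "c \<in> lang X"
    and "length c \<ge> 2"
  shows "sig X (sig X (butlast c) @ [last c]) = sig X c"
proof -
  define u where "u = butlast c"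
  define k where "k = (LEAST m. significant X (drop m u))"
  have "c \<noteq> []" "length u \<ge> 1"
    using assms(3) unfolding u_def by auto
  then have u: "u \<in> lang X" "u \<noteq> []"
    using lang_butlast[OF assms(2), folded u_def] by auto
  have c: "u @ [last c] = c"
    unfolding u_def using \<open>c \<noteq> []\<close> by (rule append_butlast_last_id)
  have drop_c: "drop j c = drop j u @ [last c]" if "j \<le> length u" for j
    using arg_cong[OF c, of "drop j"] that by simp
  have k: "k < length u"
    unfolding k_def using Least_significant_less[OF u] .
  have "\<not> significant X (drop j c)" if "j < k" for j
  proof -
    have "\<not> significant X (drop j u)"
      using not_less_Least that unfolding k_def .
    then show ?thesis
      using not_significant_snoc[of "drop j u" "last c" X] lang_drop[OF assms(2), of j]
        drop_c[of j] that k by simp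
  qed
  then have "sig X (drop k c) = sig X c"
    by (rule sig_drop_eq[OF assms(2) \<open>c \<noteq> []\<close>])
  moreover have "sig X u = drop k u"
    unfolding sig_def k_def ..
  ultimately show ?thesis
    using drop_c[of k] k unfolding u_def by simp
qed

end
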